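(* Let $0<e_0\le1$. For the problem $P_m, e_{i,k}\ge e_0\mid\mid C_{\max}$, every list schedule (LS) satisfies $\frac{C_{\max}(LS)}{C^*_{\max}}\le 1+\frac{1}{e_0}$, where $C^*_{\max}$ is the optimal makespan.
   Context: Shared-processing parallel machine scheduling: $m$ identical machines $M_1,\dots,M_m$, $n$ primary jobs available at time $0$ with processing times $p_j>0$, each processed without interruption on one machine, jobs on a machine processed one after another. The time axis of machine $M_i$ is partitioned into consecutive intervals $(0,t_{i,1}],(t_{i,1},t_{i,2}],\dots$ with sharing ratios $e_{i,k}\in(0,1]$; during the $k$-th interval $M_i$ processes primary work at rate $e_{i,k}$. In $P_m, e_{i,k}\ge e_0\mid\mid C_{\max}$ all sharing ratios satisfy $e_{i,k}\ge e_0$ and the objective is the makespan $C_{\max}=\max_j C_j$. List Scheduling (LS): given an arbitrary ordered list of the jobs, the jobs are scheduled one by one in list order, each assigned to a machine that becomes available (finishes its currently assigned jobs) earliest, starting at that time. *)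

theory Defs
  imports "HOL-Analysis.Analysis"
begin

text \<open>For machine i, the breakpoints are t i 0 = 0 < t i 1 < t i 2 < ...
  (unbounded, so the intervals partition the time axis (0,\<infinity>)), and the k-th interval
  (t i k, t i (Suc k)] has sharing ratio r i k.  A profile with finitely many intervals is the
  special case where the ratio is eventually constant.\<close>

definition rate :: "(nat \<Rightarrow> nat \<Rightarrow> real) \<Rightarrow> (nat \<Rightarrow> nat \<Rightarrow> real) \<Rightarrow> nat \<Rightarrow> real \<Rightarrow> real" where
  "rate t r i \<tau> = r i (LEAST k. \<tau> \<le> t i (Suc k))"

definition valid_profile :: "real \<Rightarrow> nat \<Rightarrow> (nat \<Rightarrow> nat \<Rightarrow> real) \<Rightarrow> (nat \<Rightarrow> nat \<Rightarrow> real) \<Rightarrow> bool" where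
  "valid_profile e0 m t r \<longleftrightarrow>
     (\<forall>i<m. t i 0 = 0 \<and> strict_mono (t i) \<and> (\<forall>x. \<exists>k. x \<le> t i k)
            \<and> (\<forall>k. e0 \<le> r i k \<and> r i k \<le> 1))"

definition feasible :: "nat \<Rightarrow> nat \<Rightarrow> (nat \<Rightarrow> real) \<Rightarrow> (nat \<Rightarrow> nat \<Rightarrow> real) \<Rightarrow> (nat \<Rightarrow> nat \<Rightarrow> real)
     \<Rightarrow> (nat \<Rightarrow> nat) \<Rightarrow> (nat \<Rightarrow> real) \<Rightarrow> (nat \<Rightarrow> real) \<Rightarrow> bool" where
  "feasible m n p t r a S C \<longleftrightarrow>
     (\<forall>j<n. a j < m \<and> 0 \<le> S j \<and> S j \<le> C j \<and> (rate t r (a j) has_integral p j) {S j..C j}) \<and>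
     (\<forall>j<n. \<forall>j'<n. j \<noteq> j' \<and> a j = a j' \<longrightarrow> C j \<le> S j' \<or> C j' \<le> S j)"

definition makespan :: "nat \<Rightarrow> (nat \<Rightarrow> real) \<Rightarrow> real" where
  "makespan n C = Max (insert 0 (C ` {..<n}))"

definition avail :: "nat list \<Rightarrow> (nat \<Rightarrow> nat) \<Rightarrow> (nat \<Rightarrow> real) \<Rightarrow> nat \<Rightarrow> nat \<Rightarrow> real" where
  "avail \<pi> a C q i = Max (insert 0 ((\<lambda>l. C (\<pi> ! l)) ` {l. l < q \<and> a (\<pi> ! l) = i}))"

definition is_LS :: "nat \<Rightarrow> nat \<Rightarrow> (nat \<Rightarrow> real) \<Rightarrow> (nat \<Rightarrow> nat \<Rightarrow> real) \<Rightarrow> (nat \<Rightarrow> nat \<Rightarrow> real)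
     \<Rightarrow> nat list \<Rightarrow> (nat \<Rightarrow> nat) \<Rightarrow> (nat \<Rightarrow> real) \<Rightarrow> (nat \<Rightarrow> real) \<Rightarrow> bool" where
  "is_LS m n p t r \<pi> a S C \<longleftrightarrow>
     feasible m n p t r a S C \<and> distinct \<pi> \<and> set \<pi> = {..<n} \<and>
     (\<forall>q<n. S (\<pi> ! q) = avail \<pi> a C q (a (\<pi> ! q)) \<and>
            (\<forall>i<m. avail \<pi> a C q (a (\<pi> ! q)) \<le> avail \<pi> a C q i))"

end

theory Submission
  imports Defs
begin

text \<open>Let T be the makespan of any feasible schedule and let j be a job finishing last in the list
  schedule. Job j starts no later than T: otherwise, when j was scheduled, every machine had been
  busy throughout [0, T] (list scheduling creates no idle time), so the jobs listed before j would
  carry at least the work that any schedule finishing by T processes, i.e. all the work, which is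
  impossible as p j > 0. Since all sharing ratios are at most 1, p j \<le> T; since they are at least
  e0, job j then runs for at most p j / e0 \<le> T / e0.\<close>

lemma has_integral_lower_bound_const:
  fixes f :: "real \<Rightarrow> real"
  assumes "(f has_integral v) {a..b}" "a \<le> b" "\<And>x. x \<in> {a..b} \<Longrightarrow> c \<le> f x"
  shows "c * (b - a) \<le> v"
  using has_integral_le[OF has_integral_const_real[of c a b] assms(1)] assms(2,3)
  by (simp add: mult.commute)

lemma has_integral_upper_bound_const:
  fixes f :: "real \<Rightarrow> real"
  assumes "(f has_integral v) {a..b}" "a \<le> b" "\<And>x. x \<in> {a..b} \<Longrightarrow> f x \<le> c"
  shows "v \<le> c * (b - a)"
  using has_integral_le[OF assms(1) has_integral_const_real[of c a b]] assms(2,3)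
  by (simp add: mult.commute)

lemma sum_le_has_integral_of_disjoint_intervals:
  fixes f :: "real \<Rightarrow> real"
  assumes "finite J" and f: "(f has_integral I) {L..M}" "\<And>x. x \<in> {L..M} \<Longrightarrow> 0 \<le> f x"
    and p: "\<And>j. j \<in> J \<Longrightarrow> (f has_integral p j) {S j..C j}"
    and inside: "\<And>j. j \<in> J \<Longrightarrow> L \<le> S j \<and> C j \<le> M"
    and disjoint: "\<And>j j'. j \<in> J \<Longrightarrow> j' \<in> J \<Longrightarrow> j \<noteq> j' \<Longrightarrow> C j \<le> S j' \<or> C j' \<le> S j"
  shows "sum p J \<le> I"
proof (rule has_integral_subset_le)
  have "negligible ({S j..C j} \<inter> {S j'..C j'})" if "C j \<le> S j'" for j j'
    by (rule negligible_subset[OF negligible_sing[of "C j"]]) (use that in auto)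
  then have "pairwise (\<lambda>j j'. negligible ({S j..C j} \<inter> {S j'..C j'})) J"
    using disjoint unfolding pairwise_def by (metis inf_commute)
  then show "(f has_integral sum p J) (\<Union>j\<in>J. {S j..C j})"
    using has_integral_UN[of J f p "\<lambda>j. {S j..C j}"] \<open>finite J\<close> p by blast
  show "(\<Union>j\<in>J. {S j..C j}) \<subseteq> {L..M}"
    using inside by fastforce
qed (use f in auto)

lemma sum_nth_prefix_less:
  fixes p :: "'a \<Rightarrow> real"
  assumes "distinct xs" "q < length xs" "\<And>x. x \<in> set xs \<Longrightarrow> 0 < p x"
  shows "(\<Sum>l<q. p (xs ! l)) < sum p (set xs)"
proof -
  have nonneg: "0 \<le> p (xs ! l)" if "l < length xs" for l
    using assms(3) that by (simp add: less_imp_le)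
  have "(\<Sum>l<q. p (xs ! l)) < (\<Sum>l<Suc q. p (xs ! l))"
    using assms(2,3) by simp
  also have "\<dots> \<le> (\<Sum>l<length xs. p (xs ! l))"
    by (rule sum_mono2) (use assms(2) nonneg in auto)
  also have "\<dots> = sum p (set xs)"
    using assms(1) by (simp add: sum.distinct_set_conv_list sum_list_sum_nth atLeast0LessThan)
  finally show ?thesis .
qed

lemma valid_profile_rate_bounds:
  assumes "valid_profile e0 m t r" "i < m"
  shows "e0 \<le> rate t r i x" "rate t r i x \<le> 1"
  using assms unfolding valid_profile_def rate_def by auto

lemma feasible_processing_time_bounds:
  assumes "feasible m n p t r a S C" "valid_profile e0 m t r" "j < n"
  shows "e0 * (C j - S j) \<le> p j" "p j \<le> C j - S j"
proof -
  have "a j < m" "S j \<le> C j" and p: "(rate t r (a j) has_integral p j) {S j..C j}"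
    using assms(1,3) unfolding feasible_def by auto
  with valid_profile_rate_bounds[OF assms(2)] show "e0 * (C j - S j) \<le> p j" "p j \<le> C j - S j"
    using has_integral_lower_bound_const[OF p] has_integral_upper_bound_const[OF p, of 1] by auto
qed

lemma makespan_ge: "j < n \<Longrightarrow> C j \<le> makespan n C"
  unfolding makespan_def by (rule Max_ge) auto

lemma makespan_nonneg: "0 \<le> makespan n C"
  unfolding makespan_def by (rule Max_ge) auto

lemma makespan_attained: "makespan n C = 0 \<or> (\<exists>j<n. makespan n C = C j)"
proof -
  have "makespan n C \<in> insert 0 (C ` {..<n})"
    unfolding makespan_def by (rule Max_in) auto
  then show ?thesis by auto
qed

definition load :: "nat list \<Rightarrow> (nat \<Rightarrow> nat) \<Rightarrow> (nat \<Rightarrow> real) \<Rightarrow> nat \<Rightarrow> nat \<Rightarrow> real" where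
  "load \<pi> a p q i = (\<Sum>l | l < q \<and> a (\<pi> ! l) = i. p (\<pi> ! l))"

lemma load_Suc:
  "load \<pi> a p (Suc q) i = (if a (\<pi> ! q) = i then p (\<pi> ! q) + load \<pi> a p q i else load \<pi> a p q i)"
proof -
  have "{l. l < Suc q \<and> a (\<pi> ! l) = i} =
      (if a (\<pi> ! q) = i then insert q {l. l < q \<and> a (\<pi> ! l) = i} else {l. l < q \<and> a (\<pi> ! l) = i})"
    by (auto simp: less_Suc_eq)
  then show ?thesis
    unfolding load_def by simp
qed

lemma sum_load:
  assumes "\<And>l. l < q \<Longrightarrow> a (\<pi> ! l) < m"
  shows "(\<Sum>i<m. load \<pi> a p q i) = (\<Sum>l<q. p (\<pi> ! l))"
  unfolding load_def using sum.group[of "{..<q}" "{..<m}" "\<lambda>l. a (\<pi> ! l)" "\<lambda>l. p (\<pi> ! l)"] assms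
  by auto

lemma avail_nonneg: "0 \<le> avail \<pi> a C q i"
  unfolding avail_def by (rule Max_ge) auto

lemma avail_Suc:
  "avail \<pi> a C (Suc q) i =
    (if a (\<pi> ! q) = i then max (C (\<pi> ! q)) (avail \<pi> a C q i) else avail \<pi> a C q i)"
proof -
  have "{l. l < Suc q \<and> a (\<pi> ! l) = i} =
      (if a (\<pi> ! q) = i then insert q {l. l < q \<and> a (\<pi> ! l) = i} else {l. l < q \<and> a (\<pi> ! l) = i})"
    by (auto simp: less_Suc_eq)
  then show ?thesis
    unfolding avail_def by (simp add: insert_commute[of 0 "C (\<pi> ! q)"])
qed

lemma is_LS_length: "is_LS m n p t r \<pi> a S C \<Longrightarrow> length \<pi> = n"
  unfolding is_LS_def by (metis card_lessThan distinct_card)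

lemma is_LS_has_integral_load:
  assumes LS: "is_LS m n p t r \<pi> a S C" and "q \<le> n"
  shows "(rate t r i has_integral load \<pi> a p q i) {0..avail \<pi> a C q i}"
  using \<open>q \<le> n\<close>
proof (induction q)
  case 0
  then show ?case unfolding avail_def load_def by (simp add: has_integral_refl)
next
  case (Suc q)
  let ?j = "\<pi> ! q"
  have "?j \<in> set \<pi>"
    using Suc.prems is_LS_length[OF LS] by simp
  then have "?j < n"
    using LS unfolding is_LS_def by auto
  then have start: "S ?j = avail \<pi> a C q (a ?j)" and "S ?j \<le> C ?j"
    and job: "(rate t r (a ?j) has_integral p ?j) {S ?j..C ?j}"
    using LS Suc.prems unfolding is_LS_def feasible_def by auto
  have IH: "(rate t r i has_integral load \<pi> a p q i) {0..avail \<pi> a C q i}"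
    using Suc by simp
  show ?case
  proof (cases "a ?j = i")
    case True
    have "(rate t r i has_integral load \<pi> a p q i + p ?j) {0..C ?j}"
      using has_integral_combine[OF avail_nonneg _ IH] job \<open>S ?j \<le> C ?j\<close> start True by simp
    then show ?thesis
      using True start \<open>S ?j \<le> C ?j\<close> by (simp add: avail_Suc load_Suc add.commute)
  next
    case False
    then show ?thesis
      using IH by (simp add: avail_Suc load_Suc)
  qed
qed

lemma feasible_machine_work_le_integral:
  assumes opt: "feasible m n p t r a S C" and "i < m" and nonneg: "\<And>x. 0 \<le> rate t r i x"
    and I: "(rate t r i has_integral I) {0..M}" and "makespan n C \<le> M"
  shows "sum p {j. j \<in> {..<n} \<and> a j = i} \<le> I"
proof (rule sum_le_has_integral_of_disjoint_intervals[OF _ I])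
  fix j assume j: "j \<in> {j. j \<in> {..<n} \<and> a j = i}"
  then show "(rate t r i has_integral p j) {S j..C j}"
    using opt unfolding feasible_def by auto
  show "0 \<le> S j \<and> C j \<le> M"
    using j opt makespan_ge[of j n C] \<open>makespan n C \<le> M\<close> unfolding feasible_def by fastforce
qed (use opt nonneg in \<open>auto simp: feasible_def\<close>)

lemma is_LS_start_le_makespan:
  assumes LS: "is_LS m n p t r \<pi> a S C" and opt: "feasible m n p t r a' S' C'"
    and pos: "\<forall>j<n. 0 < p j" and nonneg: "\<And>i x. i < m \<Longrightarrow> 0 \<le> rate t r i x" and "j < n"
  shows "S j \<le> makespan n C'"
proof (rule ccontr)
  have len: "length \<pi> = n" and dist: "distinct \<pi>" and set: "set \<pi> = {..<n}"
    using LS is_LS_length unfolding is_LS_def by auto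
  then obtain q where q: "q < n" "\<pi> ! q = j"
    using \<open>j < n\<close> by (metis in_set_conv_nth lessThan_iff)
  have on_machines: "a k < m" "a' k < m" if "k < n" for k
    using that LS opt unfolding is_LS_def feasible_def by auto
  assume "\<not> S j \<le> makespan n C'"
  then have busy: "makespan n C' \<le> avail \<pi> a C q i" if "i < m" for i
    using LS q that unfolding is_LS_def by fastforce
  have "sum p {..<n} = (\<Sum>i<m. sum p {k. k \<in> {..<n} \<and> a' k = i})"
    by (rule sum.group[symmetric]) (use on_machines in auto)
  also have "\<dots> \<le> (\<Sum>i<m. load \<pi> a p q i)"
    using feasible_machine_work_le_integral[OF opt _ nonneg is_LS_has_integral_load[OF LS] busy] q
    by (intro sum_mono) auto
  also have "\<dots> = (\<Sum>l<q. p (\<pi> ! l))"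
    by (rule sum_load) (metis lessThan_iff nth_mem order.strict_trans len q(1) set on_machines(1))
  also have "\<dots> < sum p (set \<pi>)"
    by (rule sum_nth_prefix_less) (use dist len q pos set in auto)
  finally show False
    using set by simp
qed

theorem theorem2:
  fixes e0 :: real and m n :: nat and p :: "nat \<Rightarrow> real"
    and t r :: "nat \<Rightarrow> nat \<Rightarrow> real" and \<pi> :: "nat list"
    and a a' :: "nat \<Rightarrow> nat" and S C S' C' :: "nat \<Rightarrow> real"
  assumes "0 < e0" and "e0 \<le> 1" and "1 \<le> m"
    and "\<forall>j<n. 0 < p j"
    and "valid_profile e0 m t r"
    and "is_LS m n p t r \<pi> a S C"
    and "feasible m n p t r a' S' C'"
  shows "makespan n C \<le> (1 + 1 / e0) * makespan n C'"
proof -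
  let ?T = "makespan n C'"
  consider "makespan n C = 0" | j where "j < n" "makespan n C = C j"
    using makespan_attained by blast
  then show ?thesis
  proof cases
    case 1
    then show ?thesis
      using makespan_nonneg[of n C'] \<open>0 < e0\<close> by simp
  next
    case (2 j)
    have "0 \<le> rate t r i x" if "i < m" for i x
      using valid_profile_rate_bounds(1)[OF assms(5) that, of x] \<open>0 < e0\<close> by linarith
    then have "S j \<le> ?T"
      using is_LS_start_le_makespan[OF assms(6,7,4) _ \<open>j < n\<close>] by blast
    moreover have "e0 * (C j - S j) \<le> p j"
      using feasible_processing_time_bounds(1)[OF _ assms(5) \<open>j < n\<close>] assms(6)
      unfolding is_LS_def by blast
    moreover have "p j \<le> ?T"
      using feasible_processing_time_bounds(2)[OF assms(7,5) \<open>j < n\<close>] makespan_ge[OF \<open>j < n\<close>, of C']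
        assms(7) \<open>j < n\<close> unfolding feasible_def by fastforce
    ultimately have "C j - S j \<le> ?T / e0"
      using \<open>0 < e0\<close> by (simp add: pos_le_divide_eq mult.commute)
    then have "C j \<le> ?T + ?T / e0"
      using \<open>S j \<le> ?T\<close> by linarith
    then show ?thesis
      using 2 by (simp add: algebra_simps)
  qed
qed

end
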